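(* Let $a$ be a positive integer and let $P_a = \{C_{i,a+1} : 1 \le i \le 2a+1\} \cup \{C_{a+1,j} : 1 \le j \le 2a+1\}$ be the plus polyomino, of size $n = 4a+1$. Then on the $n \times n$ board, $\mathrm{cp}(P_a) = 1$, where $\mathrm{cp}(P_a)$ denotes the common value $\mathrm{cp}_{\mathrm{fixed}}(P_a) = \mathrm{cp}_{\mathrm{free}}(P_a)$.
   Context: For integers $i,j$, $C_{i,j}$ denotes the unit square cell in column $i$ and row $j$ of the integer grid (columns numbered left to right, rows numbered top to bottom). A polyomino is a finite set of cells; its size is its number of cells. For a polyomino $\mathcal{P}$ of size $n$ the board is $\mathbb{B} = \{C_{i,j} : 1 \le i,j \le n\}$. The shift of $\mathcal{P}$ by integers $(c,d)$ is $\mathcal{P}+(c,d) = \{C_{x+c,y+d} : C_{x,y} \in \mathcal{P}\}$. A fixed copy of $\mathcal{P}$ is any shift of $\mathcal{P}$; a free copy is any shift of a rotation of $\mathcal{P}$ by a multiple of $90^\circ$ (for $P_a$, every rotation equals $P_a$, so fixed and free copies coincide). A set of polyominoes is a valid arrangement if each is contained in $\mathbb{B}$ and they are pairwise disjoint. A fixed (resp. free) packing of $\mathcal{P}$ is a set of fixed (resp. free) copies of $\mathcal{P}$ forming a valid arrangement such that adding any further fixed (resp. free) copy yields an invalid arrangement. The clumsy fixed (resp. free) packing number $\mathrm{cp}_{\mathrm{fixed}}(\mathcal{P})$ (resp. $\mathrm{cp}_{\mathrm{free}}(\mathcal{P})$) is the minimum number of polyominoes in such a packing on the $n\times n$ board.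 *)

theory Defs
  imports Main
begin

(* A cell C_{i,j} is the pair (i,j) :: int * int  (column i, row j). *)
type_synonym cell = "int \<times> int"
type_synonym polyomino = "cell set"

definition shift :: "polyomino \<Rightarrow> int \<Rightarrow> int \<Rightarrow> polyomino" where
  "shift P c d = (\<lambda>(x,y). (x + c, y + d)) ` P"

definition rot90 :: "polyomino \<Rightarrow> polyomino" where
  "rot90 P = (\<lambda>(x,y). (- y, x)) ` P"

definition board :: "nat \<Rightarrow> polyomino" where
  "board n = {1..int n} \<times> {1..int n}"

definition fixed_copies :: "polyomino \<Rightarrow> polyomino set" where
  "fixed_copies P = {shift P c d | c d. True}"

definition free_copies :: "polyomino \<Rightarrow> polyomino set" where
  "free_copies P = {shift ((rot90 ^^ k) P) c d | k c d. k < 4}"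

definition valid_arrangement :: "nat \<Rightarrow> polyomino set \<Rightarrow> bool" where
  "valid_arrangement n S \<longleftrightarrow>
     (\<forall>Q\<in>S. Q \<subseteq> board n) \<and> (\<forall>Q\<in>S. \<forall>R\<in>S. Q \<noteq> R \<longrightarrow> Q \<inter> R = {})"

definition is_packing :: "polyomino \<Rightarrow> polyomino set \<Rightarrow> polyomino set \<Rightarrow> bool" where
  "is_packing P copies S \<longleftrightarrow>
     S \<subseteq> copies \<and> valid_arrangement (card P) S \<and>
     (\<forall>Q\<in>copies. Q \<notin> S \<longrightarrow> \<not> valid_arrangement (card P) (insert Q S))"

definition cp_fixed :: "polyomino \<Rightarrow> nat" where
  "cp_fixed P = (LEAST k. \<exists>S. is_packing P (fixed_copies P) S \<and> card S = k)"

definition cp_free :: "polyomino \<Rightarrow> nat" where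
  "cp_free P = (LEAST k. \<exists>S. is_packing P (free_copies P) S \<and> card S = k)"

definition plus_poly :: "int \<Rightarrow> polyomino" where
  "plus_poly a = {(i, a + 1) | i. 1 \<le> i \<and> i \<le> 2*a + 1} \<union> {(a + 1, j) | j. 1 \<le> j \<and> j \<le> 2*a + 1}"

end

theory Submission
  imports Defs
begin

(* A plus with arms of length a fits in the (4a+1) x (4a+1) board only if its centre lies
   within distance a of the middle cell in both coordinates; then its horizontal arm crosses
   the middle column inside the vertical arm of the plus centred at the middle cell. Since
   every rotation of a plus is a plus, this central plus alone blocks all fixed and free
   copies, so it is a packing of size 1, while the empty set is not a packing. *)

definition plus_centered :: "int \<Rightarrow> int \<Rightarrow> int \<Rightarrow> polyomino" where
  "plus_centered a cx cy =
     {(x, y). (y = cy \<and> \<bar>x - cx\<bar> \<le> a) \<or> (x = cx \<and> \<bar>y - cy\<bar> \<le> a)}"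

lemma mem_shift_iff: "(u, v) \<in> shift P c d \<longleftrightarrow> (u - c, v - d) \<in> P"
  unfolding shift_def by (force simp: image_iff)

lemma mem_rot90_iff: "(u, v) \<in> rot90 P \<longleftrightarrow> (v, - u) \<in> P"
  unfolding rot90_def by (force simp: image_iff)

lemma plus_poly_eq_plus_centered: "a \<ge> 0 \<Longrightarrow> plus_poly a = plus_centered a (a + 1) (a + 1)"
  unfolding plus_poly_def plus_centered_def by (auto simp: abs_le_iff)

lemma shift_plus_centered: "shift (plus_centered a cx cy) c d = plus_centered a (cx + c) (cy + d)"
  by (auto simp: mem_shift_iff plus_centered_def algebra_simps)

lemma rot90_plus_centered: "rot90 (plus_centered a cx cy) = plus_centered a (- cy) cx"
  by (auto simp: mem_rot90_iff plus_centered_def algebra_simps abs_minus_commute)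

lemma funpow_rot90_plus_centered:
  "\<exists>cx' cy'. (rot90 ^^ k) (plus_centered a cx cy) = plus_centered a cx' cy'"
  by (induction k) (auto simp: rot90_plus_centered, blast)

lemma card_plus_centered:
  assumes "a \<ge> 0"
  shows "card (plus_centered a cx cy) = nat (4 * a + 1)"
proof -
  let ?row = "(\<lambda>x. (x, cy)) ` {cx - a..cx + a}"
  let ?column = "(\<lambda>y. (cx, y)) ` ({cy - a..cy + a} - {cy})"
  have split: "plus_centered a cx cy = ?row \<union> ?column"
    unfolding plus_centered_def by (auto simp: image_iff abs_le_iff)
  have "card ?row = nat (2 * a + 1)"
    by (subst card_image) (auto simp: inj_on_def)
  moreover have "card ?column = nat (2 * a)"
    using assms by (subst card_image) (auto simp: inj_on_def)
  moreover have "?row \<inter> ?column = {}"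
    by auto
  ultimately show ?thesis
    unfolding split using assms by (subst card_Un_disjoint) auto
qed

lemma fixed_copies_subset_free_copies: "fixed_copies P \<subseteq> free_copies P"
  unfolding fixed_copies_def free_copies_def by (force intro: exI[of _ 0])

lemma free_copies_plus_poly:
  assumes "a \<ge> 0" "Q \<in> free_copies (plus_poly a)"
  obtains cx cy where "Q = plus_centered a cx cy"
proof -
  obtain k c d where Q: "Q = shift ((rot90 ^^ k) (plus_poly a)) c d"
    using assms(2) unfolding free_copies_def by blast
  obtain cx cy where "(rot90 ^^ k) (plus_poly a) = plus_centered a cx cy"
    using funpow_rot90_plus_centered assms(1) plus_poly_eq_plus_centered by metis
  then show thesis
    using that Q shift_plus_centered by metis
qed

lemma central_plus_in_fixed_copies:
  "a \<ge> 0 \<Longrightarrow> plus_centered a (2 * a + 1) (2 * a + 1) \<in> fixed_copies (plus_poly a)"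
  unfolding fixed_copies_def
  by (auto simp: plus_poly_eq_plus_centered shift_plus_centered intro!: exI[of _ a])

lemma central_plus_subset_board:
  "a \<ge> 0 \<Longrightarrow> plus_centered a (2 * a + 1) (2 * a + 1) \<subseteq> board (nat (4 * a + 1))"
  unfolding board_def plus_centered_def by auto

lemma plus_centered_meets_central_plus:
  assumes "a \<ge> 0" and fits: "plus_centered a cx cy \<subseteq> board (nat (4 * a + 1))"
  shows "plus_centered a cx cy \<inter> plus_centered a (2 * a + 1) (2 * a + 1) \<noteq> {}"
proof -
  have "(cx - a, cy) \<in> plus_centered a cx cy" "(cx + a, cy) \<in> plus_centered a cx cy"
    "(cx, cy - a) \<in> plus_centered a cx cy" "(cx, cy + a) \<in> plus_centered a cx cy"
    using assms(1) unfolding plus_centered_def by auto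
  then have "cx - a \<ge> 1" "cx + a \<le> 4 * a + 1" "cy - a \<ge> 1" "cy + a \<le> 4 * a + 1"
    using fits assms(1) unfolding board_def by auto
  then have "(2 * a + 1, cy) \<in> plus_centered a cx cy \<inter> plus_centered a (2 * a + 1) (2 * a + 1)"
    unfolding plus_centered_def by auto
  then show ?thesis
    by blast
qed

lemma valid_arrangement_finite: "valid_arrangement n S \<Longrightarrow> finite S"
  unfolding valid_arrangement_def
  by (rule finite_subset[of _ "Pow (board n)"]) (auto simp: board_def)

lemma is_packing_singleton:
  assumes "Z \<in> copies" "Z \<subseteq> board (card P)"
    and meets: "\<And>Q. Q \<in> copies \<Longrightarrow> Q \<subseteq> board (card P) \<Longrightarrow> Q \<inter> Z \<noteq> {}"
  shows "is_packing P copies {Z}"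
  unfolding is_packing_def
proof (intro conjI ballI impI)
  show "{Z} \<subseteq> copies" "valid_arrangement (card P) {Z}"
    using assms(1,2) unfolding valid_arrangement_def by auto
next
  fix Q assume "Q \<in> copies" "Q \<notin> {Z}"
  then show "\<not> valid_arrangement (card P) (insert Q {Z})"
    using meets unfolding valid_arrangement_def by auto
qed

lemma least_packing_size_eq_1:
  assumes "Z \<in> copies" "Z \<subseteq> board (card P)"
    and "\<And>Q. Q \<in> copies \<Longrightarrow> Q \<subseteq> board (card P) \<Longrightarrow> Q \<inter> Z \<noteq> {}"
  shows "(LEAST k. \<exists>S. is_packing P copies S \<and> card S = k) = 1"
proof (rule Least_equality)
  show "\<exists>S. is_packing P copies S \<and> card S = 1"
    using is_packing_singleton[OF assms] by (intro exI[of _ "{Z}"]) simp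
next
  fix k assume "\<exists>S. is_packing P copies S \<and> card S = k"
  then obtain S where S: "is_packing P copies S" "card S = k"
    by blast
  have "S \<noteq> {}"
    using S(1) assms(1,2) unfolding is_packing_def valid_arrangement_def by auto
  moreover have "finite S"
    using S(1) valid_arrangement_finite unfolding is_packing_def by blast
  ultimately have "card S > 0"
    by (simp add: card_gt_0_iff)
  then show "1 \<le> k"
    using S(2) by simp
qed

theorem theorem10:
  fixes a :: int
  assumes "a \<ge> 1"
  shows "cp_fixed (plus_poly a) = 1 \<and> cp_free (plus_poly a) = 1"
proof -
  let ?Z = "plus_centered a (2 * a + 1) (2 * a + 1)"
  have a: "a \<ge> 0"
    using assms by simp
  have card: "card (plus_poly a) = nat (4 * a + 1)"
    using a by (simp add: plus_poly_eq_plus_centered card_plus_centered)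
  have Z_fixed: "?Z \<in> fixed_copies (plus_poly a)"
    using a by (rule central_plus_in_fixed_copies)
  then have Z_free: "?Z \<in> free_copies (plus_poly a)"
    using fixed_copies_subset_free_copies by blast
  have Z_fits: "?Z \<subseteq> board (card (plus_poly a))"
    unfolding card using a by (rule central_plus_subset_board)
  have meets: "Q \<inter> ?Z \<noteq> {}"
    if copy: "Q \<in> free_copies (plus_poly a)" and fits: "Q \<subseteq> board (card (plus_poly a))" for Q
  proof -
    obtain cx cy where "Q = plus_centered a cx cy"
      using free_copies_plus_poly[OF a copy] .
    then show ?thesis
      using plus_centered_meets_central_plus[OF a] fits unfolding card by simp
  qed
  have "cp_fixed (plus_poly a) = 1"
    unfolding cp_fixed_def
  proof (rule least_packing_size_eq_1[OF Z_fixed Z_fits])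
    show "Q \<inter> ?Z \<noteq> {}"
      if "Q \<in> fixed_copies (plus_poly a)" "Q \<subseteq> board (card (plus_poly a))" for Q
      using meets that fixed_copies_subset_free_copies by blast
  qed
  moreover have "cp_free (plus_poly a) = 1"
    unfolding cp_free_def using Z_free Z_fits meets by (rule least_packing_size_eq_1)
  ultimately show ?thesis
    by blast
qed

end
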